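(* Let $G$ be a connected graph on at least three vertices that has no pair of open twins of degree $1$ (i.e., no two distinct leaves adjacent to the same vertex). Then $G$ admits a minimum-size locating-dominating set $S$ containing no leaf of $G$.
   Context: All graphs are finite and simple. For a vertex $v$, $N(v)$ is its open neighbourhood and $N[v]=N(v)\cup\{v\}$. For $S\subseteq V(G)$, $I(v)=N[v]\cap S$. A set $S\subseteq V(G)$ is locating-dominating if every vertex $v$ has $I(v)\neq\emptyset$ and $I(u)\neq I(v)$ for all distinct $u,v\in V(G)\setminus S$. Two distinct vertices $u,v$ are open twins if $N(u)=N(v)$; they are open twins of degree $d$ if moreover $|N(u)|=d$. A leaf is a vertex of degree $1$. *)

theory Defs
  imports Main
begin

definition simple_graph :: "'a set \<Rightarrow> ('a \<Rightarrow> 'a \<Rightarrow> bool) \<Rightarrow> bool" where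
  "simple_graph V E \<longleftrightarrow> finite V \<and> (\<forall>u v. E u v \<longrightarrow> E v u) \<and> (\<forall>v. \<not> E v v)
     \<and> (\<forall>u v. E u v \<longrightarrow> u \<in> V \<and> v \<in> V)"

definition connected_graph :: "'a set \<Rightarrow> ('a \<Rightarrow> 'a \<Rightarrow> bool) \<Rightarrow> bool" where
  "connected_graph V E \<longleftrightarrow> V \<noteq> {} \<and> (\<forall>u\<in>V. \<forall>v\<in>V. E\<^sup>*\<^sup>* u v)"

definition open_nbhd :: "'a set \<Rightarrow> ('a \<Rightarrow> 'a \<Rightarrow> bool) \<Rightarrow> 'a \<Rightarrow> 'a set" where
  "open_nbhd V E v = {u \<in> V. E v u}"

definition closed_nbhd :: "'a set \<Rightarrow> ('a \<Rightarrow> 'a \<Rightarrow> bool) \<Rightarrow> 'a \<Rightarrow> 'a set" where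
  "closed_nbhd V E v = insert v (open_nbhd V E v)"

definition is_leaf :: "'a set \<Rightarrow> ('a \<Rightarrow> 'a \<Rightarrow> bool) \<Rightarrow> 'a \<Rightarrow> bool" where
  "is_leaf V E v \<longleftrightarrow> v \<in> V \<and> card (open_nbhd V E v) = 1"

definition open_twins_deg :: "'a set \<Rightarrow> ('a \<Rightarrow> 'a \<Rightarrow> bool) \<Rightarrow> nat \<Rightarrow> 'a \<Rightarrow> 'a \<Rightarrow> bool" where
  "open_twins_deg V E d u v \<longleftrightarrow> u \<in> V \<and> v \<in> V \<and> u \<noteq> v
     \<and> open_nbhd V E u = open_nbhd V E v \<and> card (open_nbhd V E u) = d"

definition I_set :: "'a set \<Rightarrow> ('a \<Rightarrow> 'a \<Rightarrow> bool) \<Rightarrow> 'a set \<Rightarrow> 'a \<Rightarrow> 'a set" where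
  "I_set V E S v = closed_nbhd V E v \<inter> S"

definition locating_dominating :: "'a set \<Rightarrow> ('a \<Rightarrow> 'a \<Rightarrow> bool) \<Rightarrow> 'a set \<Rightarrow> bool" where
  "locating_dominating V E S \<longleftrightarrow> S \<subseteq> V
     \<and> (\<forall>v\<in>V. I_set V E S v \<noteq> {})
     \<and> (\<forall>u\<in>V - S. \<forall>v\<in>V - S. u \<noteq> v \<longrightarrow> I_set V E S u \<noteq> I_set V E S v)"

definition min_locating_dominating :: "'a set \<Rightarrow> ('a \<Rightarrow> 'a \<Rightarrow> bool) \<Rightarrow> 'a set \<Rightarrow> bool" where
  "min_locating_dominating V E S \<longleftrightarrow> locating_dominating V E S
     \<and> (\<forall>T. locating_dominating V E T \<longrightarrow> card S \<le> card T)"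

end

theory Submission
  imports Defs
begin

text \<open>Take a minimum locating-dominating set S with as few leaves as possible, and suppose
  it contains a leaf l with support vertex u. Replacing l by a suitable vertex w outside S
  keeps the set locating-dominating: w = u if u \<notin> S; otherwise w is the vertex x \<notin> S with
  I(x) = {u}, which must exist by minimality (else S - {l} would already work) and is not a
  leaf, since it would be an open twin of l of degree 1. As u is not a leaf either
  (the graph is connected with at least three vertices), the exchange lowers the number
  of leaves, a contradiction.\<close>

lemma I_set_eq: "I_set V E S y = {z \<in> S. z = y \<or> (z \<in> V \<and> E y z)}"
  unfolding I_set_def closed_nbhd_def open_nbhd_def by auto

lemma is_leaf_iff: "is_leaf V E v \<longleftrightarrow> v \<in> V \<and> (\<exists>u. open_nbhd V E v = {u})"
  unfolding is_leaf_def by (simp add: card_1_singleton_iff)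

lemma leaf_nbhd_eq:
  assumes "is_leaf V E v" and "u \<in> open_nbhd V E v"
  shows "open_nbhd V E v = {u}"
  using assms unfolding is_leaf_iff by auto

lemma leaf_support_adj_iff:
  assumes "simple_graph V E" and "open_nbhd V E l = {u}"
  shows "E y l \<longleftrightarrow> y = u"
  using assms unfolding simple_graph_def open_nbhd_def by blast

lemma leaf_support_not_leaf:
  assumes g: "simple_graph V E" and c: "connected_graph V E" and V3: "card V \<ge> 3"
    and lV: "l \<in> V" and Nl: "open_nbhd V E l = {u}"
  shows "\<not> is_leaf V E u"
proof
  assume "is_leaf V E u"
  moreover have "l \<in> open_nbhd V E u"
    using leaf_support_adj_iff[OF g Nl] lV unfolding open_nbhd_def by blast
  ultimately have Nu: "open_nbhd V E u = {l}" by (rule leaf_nbhd_eq)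
  have closed: "E a b \<Longrightarrow> a \<in> {l, u} \<Longrightarrow> b \<in> {l, u}" for a b
    using g Nl Nu unfolding simple_graph_def open_nbhd_def by blast
  have "E\<^sup>*\<^sup>* l b \<Longrightarrow> b \<in> {l, u}" for b
    by (induction rule: rtranclp_induct) (auto dest: closed)
  then have "V \<subseteq> {l, u}" using c lV unfolding connected_graph_def by blast
  then have "card V \<le> card {l, u}" by (simp add: card_mono)
  also have "\<dots> \<le> 2" by (simp add: card_insert_le_m1)
  finally show False using V3 by simp
qed

text \<open>Outside {l} the sets I(y) change only by vertices of T - S, so the one possible new
  collision is a vertex y \<notin> T with I(y) = {u} = I(l).\<close>

lemma locating_dominating_exchange_leaf:
  assumes g: "simple_graph V E" and ld: "locating_dominating V E S"
    and lS: "l \<in> S" and Nl: "open_nbhd V E l = {u}"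
    and T: "S - {l} \<subseteq> T" "T \<subseteq> V" "l \<notin> T" "u \<in> T"
    and new: "\<forall>y \<in> V - T. y \<noteq> l \<longrightarrow> I_set V E S y \<noteq> {u} \<inter> S"
  shows "locating_dominating V E T"
proof -
  have dom: "\<forall>v\<in>V. I_set V E S v \<noteq> {}"
    and sep: "\<forall>a\<in>V - S. \<forall>b\<in>V - S. a \<noteq> b \<longrightarrow> I_set V E S a \<noteq> I_set V E S b"
    using ld unfolding locating_dominating_def by blast+
  have old: "I_set V E T y \<inter> S = I_set V E S y" if "y \<in> V - T" "y \<noteq> l" for y
  proof -
    have "y \<noteq> u" using that T(4) by blast
    then have "\<not> E y l" using leaf_support_adj_iff[OF g Nl] by simp
    then show ?thesis using that T(1,3) lS unfolding I_set_eq by auto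
  qed
  have Il: "I_set V E T l = {u}"
    using T(3,4) leaf_support_adj_iff[OF g Nl] Nl g
    unfolding I_set_eq simple_graph_def open_nbhd_def by blast
  have "\<forall>v\<in>V. I_set V E T v \<noteq> {}"
  proof
    fix v assume v: "v \<in> V"
    consider "v \<in> T" | "v = l" | "v \<in> V - T" "v \<noteq> l" using v by blast
    then show "I_set V E T v \<noteq> {}"
    proof cases
      case 1
      then show ?thesis unfolding I_set_eq by blast
    next
      case 3
      then show ?thesis using old[OF 3] dom v by force
    qed (use Il in simp)
  qed
  moreover have "I_set V E T a \<noteq> I_set V E T b"
    if a: "a \<in> V - T" and b: "b \<in> V - T" and ab: "a \<noteq> b" for a b
  proof -
    have l_apart: "I_set V E T l \<noteq> I_set V E T y" if "y \<in> V - T" "y \<noteq> l" for y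
      using old[OF that] new that Il by auto
    consider "a = l" | "b = l" | "a \<noteq> l" "b \<noteq> l" by blast
    then show ?thesis
    proof cases
      case 3
      then have "a \<in> V - S" "b \<in> V - S" using a b T(1) by auto
      then show ?thesis using sep ab old[OF a 3(1)] old[OF b 3(2)] by metis
    qed (use l_apart a b ab in metis)+
  qed
  ultimately show ?thesis using T(2) unfolding locating_dominating_def by blast
qed

lemma leaf_exchange_exists:
  assumes g: "simple_graph V E" and c: "connected_graph V E" and V3: "card V \<ge> 3"
    and no_twins: "\<not> (\<exists>u v. open_twins_deg V E 1 u v)"
    and S: "min_locating_dominating V E S" and lS: "l \<in> S" and ll: "is_leaf V E l"
  shows "\<exists>w \<in> V - S. \<not> is_leaf V E w \<and> locating_dominating V E (insert w (S - {l}))"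
proof -
  obtain u where Nl: "open_nbhd V E l = {u}" using ll unfolding is_leaf_iff by blast
  have lV: "l \<in> V" using ll unfolding is_leaf_def by blast
  have uV: "u \<in> V" and ul: "u \<noteq> l"
    using Nl g unfolding open_nbhd_def simple_graph_def by blast+
  have ld: "locating_dominating V E S" and SV: "S \<subseteq> V"
    and dom: "\<forall>v\<in>V. I_set V E S v \<noteq> {}"
    and sep: "\<forall>a\<in>V - S. \<forall>b\<in>V - S. a \<noteq> b \<longrightarrow> I_set V E S a \<noteq> I_set V E S b"
    using S unfolding min_locating_dominating_def locating_dominating_def by blast+
  have exchange: "locating_dominating V E (insert w (S - {l}))"
    if "w \<in> V - S" "u \<in> insert w S" "\<forall>y \<in> V - S. y \<noteq> w \<longrightarrow> I_set V E S y \<noteq> {u} \<inter> S"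
    for w
    using that lS SV ul by (intro locating_dominating_exchange_leaf[OF g ld lS Nl]) auto
  show ?thesis
  proof (cases "u \<in> S")
    case False
    then show ?thesis
      using exchange[of u] uV dom leaf_support_not_leaf[OF g c V3 lV Nl] by auto
  next
    case uS: True
    have "\<exists>x \<in> V - S. I_set V E S x = {u}"
    proof (rule ccontr)
      assume "\<not> ?thesis"
      then have "locating_dominating V E (S - {l})"
        using uS lS SV ul by (intro locating_dominating_exchange_leaf[OF g ld lS Nl]) auto
      then have "card S \<le> card (S - {l})"
        using S unfolding min_locating_dominating_def by blast
      moreover have "finite S" using SV g finite_subset unfolding simple_graph_def by blast
      ultimately show False using lS card_Diff1_less by fastforce
    qed
    then obtain x where x: "x \<in> V - S" "I_set V E S x = {u}" by blast
    have "\<not> is_leaf V E x"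
    proof
      assume "is_leaf V E x"
      moreover have "u \<in> open_nbhd V E x"
      proof -
        have "u \<in> I_set V E S x" "u \<noteq> x" using x uS by auto
        then show ?thesis unfolding I_set_eq open_nbhd_def by simp
      qed
      ultimately have "open_nbhd V E x = {u}" by (rule leaf_nbhd_eq)
      then have "open_twins_deg V E 1 l x"
        using lV x(1) lS Nl unfolding open_twins_deg_def by (simp, blast)
      then show False using no_twins by blast
    qed
    moreover have "I_set V E S y \<noteq> {u} \<inter> S" if "y \<in> V - S" "y \<noteq> x" for y
      using sep that x uS by (metis Int_insert_left_if1 inf_bot_left)
    then have "locating_dominating V E (insert x (S - {l}))"
      using exchange[of x] x(1) uS by blast
    ultimately show ?thesis using x by blast
  qed
qed

lemma min_locating_dominating_exists:
  assumes "finite V"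
  shows "\<exists>S. min_locating_dominating V E S"
proof -
  have "locating_dominating V E V" unfolding locating_dominating_def I_set_eq by auto
  then show ?thesis unfolding min_locating_dominating_def
    using ex_has_least_nat[of "locating_dominating V E" V card] by blast
qed

theorem lemma2:
  fixes V :: "'a set" and E :: "'a \<Rightarrow> 'a \<Rightarrow> bool"
  assumes "simple_graph V E"
    and "connected_graph V E"
    and "card V \<ge> 3"
    and "\<not> (\<exists>u v. open_twins_deg V E 1 u v)"
  shows "\<exists>S. min_locating_dominating V E S \<and> (\<forall>v\<in>S. \<not> is_leaf V E v)"
proof -
  let ?leaves = "\<lambda>S. {v \<in> S. is_leaf V E v}"
  have finV: "finite V" using assms(1) unfolding simple_graph_def by blast
  obtain S where S: "min_locating_dominating V E S"
    and fewest: "\<And>T. min_locating_dominating V E T \<Longrightarrow> card (?leaves S) \<le> card (?leaves T)"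
    using min_locating_dominating_exists[OF finV, of E]
      ex_has_least_nat[of "min_locating_dominating V E" _ "\<lambda>S. card (?leaves S)"] by blast
  have finS: "finite S"
    using S finV finite_subset unfolding min_locating_dominating_def locating_dominating_def by blast
  have "\<not> is_leaf V E l" if lS: "l \<in> S" for l
  proof
    assume ll: "is_leaf V E l"
    then obtain w where w: "w \<in> V - S" "\<not> is_leaf V E w"
      and ld: "locating_dominating V E (insert w (S - {l}))"
      using leaf_exchange_exists[OF assms S lS] by blast
    have "card (insert w (S - {l})) = card S"
    proof -
      have "card (S - {l}) = card S - 1" using finS lS by simp
      moreover have "card S > 0" using finS lS card_gt_0_iff by blast
      ultimately show ?thesis using finS w(1) by simp
    qed
    then have "min_locating_dominating V E (insert w (S - {l}))"
      using S ld unfolding min_locating_dominating_def by simp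
    moreover have "?leaves (insert w (S - {l})) = ?leaves S - {l}" using w(2) by auto
    moreover have "card (?leaves S - {l}) < card (?leaves S)"
      using finS lS ll by (intro card_Diff1_less) auto
    ultimately show False using fewest[of "insert w (S - {l})"] by simp
  qed
  then show ?thesis using S by blast
qed

end
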